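(* Let $n=1$ and $k \in \{1,2\}$. Then $\mathcal{H}_{p,\beta, \frac{k}{3}, 0 }^{(l)}$ is spectrally similar to $\Delta^{(l-1)}_{p}$ with the functions \[ \phi_{p,\beta,\frac{k}{3},0}(z)=\frac{4 p \left(p - 1\right)}{4 p^{2} - \left( \beta + 2 z\right)^{2}} , \quad \quad \psi_{p,\beta, \frac{k}{3},0 }(z) = - \frac{\beta^{2} + 2 \beta p + \beta z - 2 p z - 2 p - 2 z^{2} + 2}{\beta + 2 p + 2 z}. \] The spectral decimation function $R_{p,\beta,\frac{k}{3},0 }$ and the exceptional set $\mathscr{E}_{p,\beta, \frac{k}{3},0}$ are given by \[ R_{p,\beta,\frac{k}{3},0 }(z) = \frac{\left( - \beta + 2 p - 2 z \right) \left(\beta^{2} + 2 \beta p + \beta z - 2 p z - 2 p - 2 z^{2} + 2\right)}{4 p \left(1-p\right)} , \quad \quad \mathscr{E}_{p,\beta, \frac{k}{3},0} = \left\{ - \frac{\beta}{2} - p, \ - \frac{\beta}{2} + p \right\}. \]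
   Context: Fix $p\in(0,1)$, $\beta\in\mathbb{R}$, $l\ge 1$. For $x\in\mathbb{Z}_+\setminus\{0\}$ let $m(x)$ be the largest $m$ with $3^m\mid x$, and set $p(x,x-1)=1-p$, $p(x,x+1)=p$ if $3^{-m(x)}x\equiv 1 \pmod 3$, and $p(x,x-1)=p$, $p(x,x+1)=1-p$ if $3^{-m(x)}x\equiv 2 \pmod 3$. On $V_l=\{0,1,\dots,3^l\}$ the level-$l$ self-similar almost Mathieu operator $\mathcal{H}^{(l)}_{p,\beta,\alpha,\theta}$ acts by $(\mathcal{H}^{(l)}f)(0)=\beta\cos(\theta)f(0)-f(1)$, $(\mathcal{H}^{(l)}f)(3^l)=\beta\cos(2\pi\alpha 3^l+\theta)f(3^l)-f(3^l-1)$, and for $0<x<3^l$, $(\mathcal{H}^{(l)}f)(x)=\beta\cos(2\pi\alpha x+\theta)f(x)-p(x,x-1)f(x-1)-p(x,x+1)f(x+1)$. The level-$l$ Laplacian $\Delta^{(l)}_p$ on $V_l$ is given by $(\Delta^{(l)}_pf)(0)=f(0)-f(1)$, $(\Delta^{(l)}_pf)(3^l)=f(3^l)-f(3^l-1)$, and $(\Delta^{(l)}_pf)(x)=f(x)-p(x,x-1)f(x-1)-p(x,x+1)f(x+1)$ for $0<x<3^l$. Here $\theta=0$, $\alpha=k/3$. Decompose $\mathcal{H}^{(l)}$ in block form $\begin{pmatrix}T & J^T\\ J & X\end{pmatrix}$ with respect to $\mathrm{span}\{\delta_v: v\equiv 0 \bmod 3\}\oplus\mathrm{span}\{\delta_v: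 v\not\equiv 0\bmod 3\}$. Spectral similarity of $\mathcal{H}^{(l)}$ to $\Delta^{(l-1)}_p$ (identified on the vertices $\equiv 0 \bmod 3$) with functions $\phi,\psi$ means that the Schur complement satisfies $T-z-J^T(X-z)^{-1}J=\phi(z)\Delta^{(l-1)}_p-\psi(z)I$ (equivalently $U^*(\mathcal{H}^{(l)}-z)^{-1}U=(\phi(z)\Delta^{(l-1)}_p-\psi(z))^{-1}$); the spectral decimation function is $R=\psi/\phi$ and the exceptional set is $\{z: z\in\sigma(X)\text{ or }\phi(z)=0\}$. *)

theory Defs
  imports "HOL-Analysis.Analysis"
begin

definition m3 :: "nat \<Rightarrow> nat" where
  "m3 x = (GREATEST m. 3 ^ m dvd x)"

definition trans_p :: "real \<Rightarrow> nat \<Rightarrow> nat \<Rightarrow> real" where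
  "trans_p p x y =
     (if (x div 3 ^ m3 x) mod 3 = 1 then
        (if y + 1 = x then 1 - p else if y = x + 1 then p else 0)
      else
        (if y + 1 = x then p else if y = x + 1 then 1 - p else 0))"

definition V :: "nat \<Rightarrow> nat set" where
  "V l = {0..3 ^ l}"

definition smH :: "nat \<Rightarrow> real \<Rightarrow> real \<Rightarrow> real \<Rightarrow> real \<Rightarrow> nat \<Rightarrow> nat \<Rightarrow> real" where
  "smH l p \<beta> \<alpha> \<theta> x y =
     (if x = 0 then (if y = 0 then \<beta> * cos \<theta> else if y = 1 then -1 else 0)
      else if x = 3 ^ l then
        (if y = x then \<beta> * cos (2 * pi * \<alpha> * 3 ^ l + \<theta>) else if y + 1 = x then -1 else 0)
      else (if y = x then \<beta> * cos (2 * pi * \<alpha> * real x + \<theta>) else - trans_p p x y))"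

definition lap :: "nat \<Rightarrow> real \<Rightarrow> nat \<Rightarrow> nat \<Rightarrow> real" where
  "lap l p x y =
     (if x = 0 then (if y = 0 then 1 else if y = 1 then -1 else 0)
      else if x = 3 ^ l then (if y = x then 1 else if y + 1 = x then -1 else 0)
      else (if y = x then 1 else - trans_p p x y))"

text \<open>Vertices of V_l that are multiples of 3 (block T) and those that are not (block X).\<close>
definition S0 :: "nat \<Rightarrow> nat set" where
  "S0 l = {v \<in> V l. 3 dvd v}"

definition S1 :: "nat \<Rightarrow> nat set" where
  "S1 l = {v \<in> V l. \<not> 3 dvd v}"

definition in_spec_X :: "nat \<Rightarrow> real \<Rightarrow> real \<Rightarrow> real \<Rightarrow> real \<Rightarrow> complex \<Rightarrow> bool" where
  "in_spec_X l p \<beta> \<alpha> \<theta> z \<longleftrightarrow>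
     (\<exists>f :: nat \<Rightarrow> complex. (\<exists>a\<in>S1 l. f a \<noteq> 0) \<and>
        (\<forall>a\<in>S1 l. (\<Sum>b\<in>S1 l. complex_of_real (smH l p \<beta> \<alpha> \<theta> a b) * f b) = z * f a))"

definition resX :: "nat \<Rightarrow> real \<Rightarrow> real \<Rightarrow> real \<Rightarrow> real \<Rightarrow> complex \<Rightarrow> nat \<Rightarrow> nat \<Rightarrow> complex" where
  "resX l p \<beta> \<alpha> \<theta> z = (THE G.
     (\<forall>a\<in>S1 l. \<forall>c\<in>S1 l.
        (\<Sum>b\<in>S1 l. (complex_of_real (smH l p \<beta> \<alpha> \<theta> a b) - (if a = b then z else 0)) * G b c)
          = (if a = c then 1 else 0)) \<and>
     (\<forall>a c. a \<notin> S1 l \<or> c \<notin> S1 l \<longrightarrow> G a c = 0))"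

text \<open>Schur complement T - z - B (X - z)^(-1) J, entries indexed by S0 l, where B and J are
  the off-diagonal blocks of H^(l) (B = the block called J^T in the paper).\<close>
definition schur :: "nat \<Rightarrow> real \<Rightarrow> real \<Rightarrow> real \<Rightarrow> real \<Rightarrow> complex \<Rightarrow> nat \<Rightarrow> nat \<Rightarrow> complex" where
  "schur l p \<beta> \<alpha> \<theta> z u w =
     complex_of_real (smH l p \<beta> \<alpha> \<theta> u w) - (if u = w then z else 0)
     - (\<Sum>a\<in>S1 l. \<Sum>b\<in>S1 l. complex_of_real (smH l p \<beta> \<alpha> \<theta> u a) * resX l p \<beta> \<alpha> \<theta> z a b
                              * complex_of_real (smH l p \<beta> \<alpha> \<theta> b w))"

definition exceptional_set ::
  "nat \<Rightarrow> real \<Rightarrow> real \<Rightarrow> real \<Rightarrow> real \<Rightarrow> (complex \<Rightarrow> complex) \<Rightarrow> complex set" where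
  "exceptional_set l p \<beta> \<alpha> \<theta> \<phi> = {z. in_spec_X l p \<beta> \<alpha> \<theta> z \<or> \<phi> z = 0}"

text \<open>Spectral similarity of H^(l) to Delta_p^(l-1) (vertex v of V_(l-1) identified with 3v of V_l)
  with functions phi, psi: the Schur complement identity holds off the exceptional set.\<close>
definition spectrally_similar ::
  "nat \<Rightarrow> real \<Rightarrow> real \<Rightarrow> real \<Rightarrow> real \<Rightarrow> (complex \<Rightarrow> complex) \<Rightarrow> (complex \<Rightarrow> complex) \<Rightarrow> bool" where
  "spectrally_similar l p \<beta> \<alpha> \<theta> \<phi> \<psi> \<longleftrightarrow>
     (\<forall>z. z \<notin> exceptional_set l p \<beta> \<alpha> \<theta> \<phi> \<longrightarrow>
        (\<forall>u\<in>V (l - 1). \<forall>w\<in>V (l - 1).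
           schur l p \<beta> \<alpha> \<theta> z (3 * u) (3 * w)
             = \<phi> z * complex_of_real (lap (l - 1) p u w) - (if u = w then \<psi> z else 0)))"

end

(*
  For alpha = k/3 and theta = 0 the potential is beta at multiples of 3 and -beta/2 elsewhere.
  The other vertices come in pairs {3i+1, 3i+2} coupled only to each other, with weight p, so
  X - z is block diagonal with blocks [[d, -p], [-p, d]], d = -beta/2 - z, which are inverted
  explicitly; in particular sigma(X) lies in {d^2 = p^2}. Each pair is attached to 3i and 3i+3
  with weight 1 - p, and by self-similarity of the transition probabilities the weights from 3i
  into the pairs are the Laplacian weights of i one level down. Hence the Schur complement is
  tridiagonal, and since each row of Delta has off-diagonal sum -1 it equals
  p(1-p)/(d^2-p^2) Delta - psi.
*)
theory Submission
  imports Defs "HOL-Computational_Algebra.Factorial_Ring"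
begin

lemma m3_eq_multiplicity: "x \<noteq> 0 \<Longrightarrow> m3 x = multiplicity 3 x"
  unfolding m3_def
  by (rule Greatest_equality) (auto simp: multiplicity_dvd power_dvd_iff_le_multiplicity)

lemma m3_eq_0: "\<not> 3 dvd x \<Longrightarrow> m3 x = 0"
  by (metis dvd_0_right m3_eq_multiplicity not_dvd_imp_multiplicity_0)

lemma m3_mult_3: "i \<noteq> 0 \<Longrightarrow> m3 (3 * i) = Suc (m3 i)"
  by (simp add: m3_eq_multiplicity multiplicity_times_same)

lemma trans_p_mod3_eq_1:
  "x mod 3 = 1 \<Longrightarrow> trans_p p x y = (if y + 1 = x then 1 - p else if y = x + 1 then p else 0)"
  unfolding trans_p_def by (subst m3_eq_0) auto

lemma trans_p_mod3_eq_2: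
  "x mod 3 = 2 \<Longrightarrow> trans_p p x y = (if y + 1 = x then p else if y = x + 1 then 1 - p else 0)"
  unfolding trans_p_def by (subst m3_eq_0) auto

lemma trans_p_mult_3:
  assumes "i \<noteq> 0"
  shows "trans_p p (3 * i) (3 * i + 1) = trans_p p i (i + 1)"
    and "trans_p p (3 * i) (3 * i - 1) = trans_p p i (i - 1)"
proof -
  have "3 * i div 3 ^ m3 (3 * i) = i div 3 ^ m3 i"
    using assms by (simp add: m3_mult_3)
  then show "trans_p p (3 * i) (3 * i + 1) = trans_p p i (i + 1)"
    and "trans_p p (3 * i) (3 * i - 1) = trans_p p i (i - 1)"
    unfolding trans_p_def using assms by auto
qed

lemma trans_p_eq_0: "y \<noteq> x + 1 \<Longrightarrow> y + 1 \<noteq> x \<Longrightarrow> trans_p p x y = 0"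
  unfolding trans_p_def by auto

lemma trans_p_succ_add_pred: "x \<noteq> 0 \<Longrightarrow> trans_p p x (x + 1) + trans_p p x (x - 1) = 1"
  unfolding trans_p_def by auto

lemma cos_two_pi_thirds: "cos (2 * pi * real n / 3) = (if 3 dvd n then 1 else - 1 / 2)"
proof -
  have "real n = real (n mod 3) + 3 * real (n div 3)"
    by (metis mod_div_mult_eq of_nat_add of_nat_mult of_nat_numeral mult.commute)
  then have "cos (2 * pi * real n / 3) = cos (2 * pi * real (n mod 3) / 3 + 2 * real (n div 3) * pi)"
    by (simp add: field_simps)
  also have "\<dots> = cos (2 * pi * real (n mod 3) / 3)"
    by (simp only: cos_add cos_2npi sin_2npi)
  finally have reduce: "cos (2 * pi * real n / 3) = cos (2 * pi * real (n mod 3) / 3)" .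
  consider "n mod 3 = 0" | "n mod 3 = 1" | "n mod 3 = 2" by linarith
  then show ?thesis
  proof cases
    case 3
    have "cos (4 * pi / 3) = cos (pi + pi / 3)" by (rule arg_cong[where f = cos]) simp
    also have "\<dots> = - 1 / 2" by (simp only: cos_periodic_pi2 cos_60)
    finally have "cos (4 * pi / 3) = - 1 / 2" .
    with 3 show ?thesis by (simp add: reduce dvd_eq_mod_eq_0)
  qed (auto simp: reduce cos_120)
qed

lemma cos_two_pi_k_thirds:
  assumes "k \<in> {1, 2}"
  shows "cos (2 * pi * (real k / 3) * real x) = (if 3 dvd x then 1 else - 1 / 2)"
proof -
  have "3 dvd k * x \<longleftrightarrow> 3 dvd x" using assms by auto presburger+
  moreover have "2 * pi * (real k / 3) * real x = 2 * pi * real (k * x) / 3" by simp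
  ultimately show ?thesis using cos_two_pi_thirds[of "k * x"] by presburger
qed

text \<open>On each orbit {a, \<sigma> a} this is the inverse [[d, q], [q, d]] / (d^2 - q^2) of the block
  [[d, -q], [-q, d]] by which the matrices of the locale below act.\<close>
definition pair_block_inv :: "'a set \<Rightarrow> ('a \<Rightarrow> 'a) \<Rightarrow> 'b::field \<Rightarrow> 'b \<Rightarrow> 'a \<Rightarrow> 'a \<Rightarrow> 'b" where
  "pair_block_inv S \<sigma> d q a c =
     (if a \<in> S \<and> c \<in> S
      then (d * (if a = c then 1 else 0) + q * (if \<sigma> a = c then 1 else 0)) / (d\<^sup>2 - q\<^sup>2)
      else 0)"

locale pair_block =
  fixes S :: "'a set" and \<sigma> :: "'a \<Rightarrow> 'a" and A :: "'a \<Rightarrow> 'a \<Rightarrow> 'b::field" and d q :: 'b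
  assumes finite_S: "finite S"
    and sigma_in: "\<And>a. a \<in> S \<Longrightarrow> \<sigma> a \<in> S"
    and sigma_sigma: "\<And>a. a \<in> S \<Longrightarrow> \<sigma> (\<sigma> a) = a"
    and row: "\<And>a g. a \<in> S \<Longrightarrow> (\<Sum>b\<in>S. A a b * g b) = d * g a - q * g (\<sigma> a)"
begin

lemma sum_pair_block_inv:
  assumes "a \<in> S"
  shows "(\<Sum>c\<in>S. pair_block_inv S \<sigma> d q a c * h c) = (d * h a + q * h (\<sigma> a)) / (d\<^sup>2 - q\<^sup>2)"
proof -
  have "(\<Sum>c\<in>S. pair_block_inv S \<sigma> d q a c * h c)
      = (\<Sum>c\<in>S. (d * (if a = c then h c else 0) + q * (if \<sigma> a = c then h c else 0)) / (d\<^sup>2 - q\<^sup>2))"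
    by (rule sum.cong) (simp_all add: pair_block_inv_def assms ring_distribs)
  also have "\<dots> = (d * (\<Sum>c\<in>S. if a = c then h c else 0) + q * (\<Sum>c\<in>S. if \<sigma> a = c then h c else 0))
                    / (d\<^sup>2 - q\<^sup>2)"
    by (simp add: sum_divide_distrib[symmetric] sum.distrib sum_distrib_left)
  also have "\<dots> = (d * h a + q * h (\<sigma> a)) / (d\<^sup>2 - q\<^sup>2)"
    using assms finite_S sigma_in by simp
  finally show ?thesis .
qed

lemma right_inverse:
  assumes "d\<^sup>2 \<noteq> q\<^sup>2" and "a \<in> S" and "c \<in> S"
  shows "(\<Sum>b\<in>S. A a b * pair_block_inv S \<sigma> d q b c) = (if a = c then 1 else 0)"
proof -
  let ?\<delta> = "if a = c then 1 else 0" and ?\<delta>' = "if \<sigma> a = c then 1 else 0"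
  have "(\<Sum>b\<in>S. A a b * pair_block_inv S \<sigma> d q b c)
      = d * pair_block_inv S \<sigma> d q a c - q * pair_block_inv S \<sigma> d q (\<sigma> a) c"
    using assms(2) by (rule row)
  also have "\<dots> = (d * (d * ?\<delta> + q * ?\<delta>') - q * (d * ?\<delta>' + q * ?\<delta>)) / (d\<^sup>2 - q\<^sup>2)"
    using assms(2,3) by (simp add: pair_block_inv_def sigma_in sigma_sigma diff_divide_distrib)
  also have "\<dots> = (d\<^sup>2 - q\<^sup>2) * ?\<delta> / (d\<^sup>2 - q\<^sup>2)"
    by (simp add: algebra_simps power2_eq_square)
  finally show ?thesis using assms(1) by simp
qed

lemma right_inverse_unique:
  assumes "d\<^sup>2 \<noteq> q\<^sup>2" and "a \<in> S" and "c \<in> S"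
    and G: "\<forall>a\<in>S. \<forall>c\<in>S. (\<Sum>b\<in>S. A a b * G b c) = (if a = c then 1 else 0)"
  shows "G a c = pair_block_inv S \<sigma> d q a c"
proof -
  have row_a: "d * G a c - q * G (\<sigma> a) c = (if a = c then 1 else 0)"
    using G assms(2,3) row[of a "\<lambda>b. G b c"] by simp
  have row_\<sigma>a: "d * G (\<sigma> a) c - q * G a c = (if \<sigma> a = c then 1 else 0)"
    using G assms(2,3) row[of "\<sigma> a" "\<lambda>b. G b c"] sigma_in sigma_sigma by simp
  have "(d\<^sup>2 - q\<^sup>2) * G a c = d * (d * G a c - q * G (\<sigma> a) c) + q * (d * G (\<sigma> a) c - q * G a c)"
    by (simp add: power2_eq_square algebra_simps)
  also have "\<dots> = d * (if a = c then 1 else 0) + q * (if \<sigma> a = c then 1 else 0)"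
    unfolding row_a row_\<sigma>a ..
  finally show ?thesis
    using assms(1-3) by (simp add: pair_block_inv_def eq_divide_eq mult.commute)
qed

lemma the_inverse_eq:
  assumes "d\<^sup>2 \<noteq> q\<^sup>2"
  shows "(THE G. (\<forall>a\<in>S. \<forall>c\<in>S. (\<Sum>b\<in>S. A a b * G b c) = (if a = c then 1 else 0))
                 \<and> (\<forall>a c. a \<notin> S \<or> c \<notin> S \<longrightarrow> G a c = 0))
         = pair_block_inv S \<sigma> d q"
proof (rule the_equality)
  show "(\<forall>a\<in>S. \<forall>c\<in>S. (\<Sum>b\<in>S. A a b * pair_block_inv S \<sigma> d q b c) = (if a = c then 1 else 0))
      \<and> (\<forall>a c. a \<notin> S \<or> c \<notin> S \<longrightarrow> pair_block_inv S \<sigma> d q a c = 0)"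
    using right_inverse[OF assms] by (auto simp: pair_block_inv_def)
next
  fix G
  assume "(\<forall>a\<in>S. \<forall>c\<in>S. (\<Sum>b\<in>S. A a b * G b c) = (if a = c then 1 else 0))
      \<and> (\<forall>a c. a \<notin> S \<or> c \<notin> S \<longrightarrow> G a c = 0)"
  then show "G = pair_block_inv S \<sigma> d q"
    using right_inverse_unique[OF assms] by (auto simp: pair_block_inv_def fun_eq_iff)
qed

lemma nontrivial_kernel_imp_singular:
  assumes "\<forall>a\<in>S. (\<Sum>b\<in>S. A a b * f b) = 0" and "a \<in> S" and "f a \<noteq> 0"
  shows "d\<^sup>2 = q\<^sup>2"
proof -
  have "d * f a = q * f (\<sigma> a)"
    using assms(1,2) row[of a f] by simp
  moreover have "d * f (\<sigma> a) = q * f a"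
    using assms(1,2) row[of "\<sigma> a" f] sigma_in sigma_sigma by simp
  ultimately have "d\<^sup>2 * f a = q\<^sup>2 * f a"
    by (metis power2_eq_square mult.assoc mult.left_commute)
  with assms(3) show ?thesis by simp
qed

end

text \<open>No guard is needed on x - 1: for x = 0 it is x itself, which is not in S.\<close>
lemma sum_tridiagonal:
  fixes A :: "nat \<Rightarrow> nat \<Rightarrow> 'a::semiring_0"
  assumes "finite S" and "x \<notin> S"
    and "\<And>y. y \<noteq> x \<Longrightarrow> y \<noteq> x + 1 \<Longrightarrow> y + 1 \<noteq> x \<Longrightarrow> A x y = 0"
  shows "(\<Sum>y\<in>S. A x y * g y)
       = (if x + 1 \<in> S then A x (x + 1) * g (x + 1) else 0) + (if x - 1 \<in> S then A x (x - 1) * g (x - 1) else 0)"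
proof -
  have "(\<Sum>y\<in>S. A x y * g y)
      = (\<Sum>y\<in>S. (if x + 1 = y then A x y * g y else 0) + (if x - 1 = y then A x y * g y else 0))"
  proof (rule sum.cong)
    fix y assume "y \<in> S"
    with assms(2) have "y \<noteq> x" by auto
    then show "A x y * g y = (if x + 1 = y then A x y * g y else 0) + (if x - 1 = y then A x y * g y else 0)"
      using assms(3)[of y] by auto
  qed simp
  then show ?thesis using assms(1) by (simp add: sum.distrib)
qed

lemma smH_eq_0: "y \<noteq> x \<Longrightarrow> y \<noteq> x + 1 \<Longrightarrow> y + 1 \<noteq> x \<Longrightarrow> smH l p \<beta> \<alpha> \<theta> x y = 0"
  by (simp add: smH_def trans_p_eq_0)

lemma smH_Suc_mult_3_succ:
  "smH (Suc L) p \<beta> \<alpha> \<theta> (3 * i) (3 * i + 1) = lap L p i (i + 1)"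
proof -
  \<comment> \<open>Naming 3 ^ L keeps the simplifier from discarding 0 < 3 ^ L, which the arithmetic needs.\<close>
  obtain N :: nat where N: "3 ^ L = N" "0 < N" by simp
  consider "i = 0" | "i = N" | "i \<noteq> 0" "i \<noteq> N" by blast
  then show ?thesis
    unfolding smH_def lap_def power_Suc N(1)
    by cases (use N(2) trans_p_mult_3(1)[of i p] in auto)
qed

lemma smH_Suc_mult_3_pred:
  assumes "0 < i"
  shows "smH (Suc L) p \<beta> \<alpha> \<theta> (3 * i) (3 * i - 1) = lap L p i (i - 1)"
proof -
  obtain N :: nat where N: "3 ^ L = N" "0 < N" by simp
  consider "i = N" | "i \<noteq> N" by blast
  then show ?thesis
    unfolding smH_def lap_def power_Suc N(1)
    by cases (use N(2) assms trans_p_mult_3(2)[of i p] in auto)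
qed

lemma lap_tridiagonal:
  "lap L p i j = (if j = i then 1 else 0) + (if j = i + 1 then lap L p i (i + 1) else 0)
                 + (if j + 1 = i then lap L p i (i - 1) else 0)"
proof -
  obtain N :: nat where N: "3 ^ L = N" "0 < N" by simp
  show ?thesis
    unfolding lap_def N(1) using N(2) by (auto simp: trans_p_eq_0)
qed

text \<open>The guard avoids the truncated i - 1 = 0 at i = 0, where lap L p 0 0 = 1.\<close>
lemma lap_row_sum: "lap L p i (i + 1) + (if 0 < i then lap L p i (i - 1) else 0) = -1"
proof -
  obtain N :: nat where N: "3 ^ L = N" "0 < N" by simp
  consider "i = 0" | "i = N" | "i \<noteq> 0" "i \<noteq> N" by blast
  then show ?thesis
    unfolding lap_def N(1)
    by cases (use N(2) trans_p_succ_add_pred[of i p] in auto)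
qed

definition partner :: "nat \<Rightarrow> nat" where
  "partner a = (if a mod 3 = 1 then a + 1 else a - 1)"

lemma mult_3_plus_mod_3:
  "(3 * i + 1 :: nat) mod 3 = 1" "(3 * i + 2 :: nat) mod 3 = 2"
  "\<not> 3 dvd (3 * i + 1 :: nat)" "\<not> 3 dvd (3 * i + 2 :: nat)"
  by presburger+

lemma partner_cases:
  fixes a :: nat
  assumes "\<not> 3 dvd a"
  obtains "a mod 3 = 1" and "partner a = a + 1" and "(a + 1) mod 3 = 2"
        | "a mod 3 = 2" and "partner a = a - 1" and "(a - 1) mod 3 = 1" and "0 < a"
proof -
  have "a mod 3 = 1 \<or> a mod 3 = 2" using assms by (simp add: dvd_eq_mod_eq_0) linarith
  then show ?thesis
  proof
    assume a: "a mod 3 = 1"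
    then have "(a + 1) mod 3 = 2" by presburger
    with a show ?thesis using that(1) by (simp add: partner_def)
  next
    assume a: "a mod 3 = 2"
    then have "a - 1 = 3 * (a div 3) + 1" using div_mult_mod_eq[of a 3] by linarith
    then have "(a - 1) mod 3 = 1" by simp
    moreover have "0 < a" using a by (cases a) auto
    ultimately show ?thesis using a that(2) by (simp add: partner_def)
  qed
qed

lemma partner_3_mult:
  "partner (3 * i + 1) = 3 * i + 2" "partner (3 * i + 2) = 3 * i + 1"
  unfolding partner_def mult_3_plus_mod_3 by simp_all

lemma partner_partner: "\<not> 3 dvd a \<Longrightarrow> partner (partner a) = a"
  by (erule partner_cases) (simp_all add: partner_def)

lemma finite_S1: "finite (S1 l)"
  by (simp add: S1_def V_def)

locale amo_thirds =
  fixes l k :: nat and p \<beta> :: real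
  assumes one_le_l: "1 \<le> l" and k_cases: "k \<in> {1, 2}"
begin

abbreviation H :: "nat \<Rightarrow> nat \<Rightarrow> real" where
  "H \<equiv> smH l p \<beta> (real k / 3) 0"

text \<open>dX z is the diagonal entry of X - z off the multiples of 3, and block_det z the determinant
  of its 2x2 blocks.\<close>
abbreviation dX :: "complex \<Rightarrow> complex" where
  "dX z \<equiv> - complex_of_real \<beta> / 2 - z"

abbreviation block_det :: "complex \<Rightarrow> complex" where
  "block_det z \<equiv> (dX z)\<^sup>2 - (complex_of_real p)\<^sup>2"

definition M :: nat where
  "M = 3 ^ (l - 1)"

lemma three_pow_l: "(3::nat) ^ l = 3 * M"
  using one_le_l unfolding M_def by (cases l) auto

lemma smH_diag: "H x x = (if 3 dvd x then \<beta> else - \<beta> / 2)"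
proof -
  have "3 dvd (3::nat) ^ l" by (simp add: three_pow_l)
  then show ?thesis
    using cos_two_pi_k_thirds[OF k_cases, of x] cos_two_pi_k_thirds[OF k_cases, of "3 ^ l"]
    by (auto simp: smH_def)
qed

lemma mem_S1_iff: "a \<in> S1 l \<longleftrightarrow> a < 3 * M \<and> \<not> 3 dvd a"
  unfolding S1_def V_def three_pow_l by (auto simp: le_less)

lemma mult_3_succ_in_S1: "i < M \<Longrightarrow> 3 * i + 1 \<in> S1 l"
  using mult_3_plus_mod_3(3)[of i] by (simp add: mem_S1_iff)

lemma mult_3_pred_in_S1:
  assumes "0 < i" and "i \<le> M"
  shows "3 * i - 1 \<in> S1 l"
proof -
  have "3 * i - 1 = 3 * (i - 1) + 2" using assms(1) by simp
  then show ?thesis using assms mult_3_plus_mod_3(4)[of "i - 1"] by (simp add: mem_S1_iff)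
qed

lemma partner_in_S1:
  assumes "a \<in> S1 l"
  shows "partner a \<in> S1 l"
proof -
  have a: "a < 3 * M" "\<not> 3 dvd a" using assms mem_S1_iff by auto
  from a(2) show ?thesis
  proof (cases rule: partner_cases)
    case 1
    have "a + 1 \<noteq> 3 * M" using 1(3) by auto
    with 1 a(1) show ?thesis by (simp add: mem_S1_iff dvd_eq_mod_eq_0)
  next
    case 2
    with a(1) show ?thesis by (simp add: mem_S1_iff dvd_eq_mod_eq_0)
  qed
qed

lemma smH_S1_S1:
  assumes "a \<in> S1 l" and "b \<in> S1 l"
  shows "H a b = (if b = a then - \<beta> / 2 else if b = partner a then - p else 0)"
proof -
  have a: "a < 3 ^ l" "\<not> 3 dvd a" and b: "\<not> 3 dvd b"
    using assms unfolding mem_S1_iff three_pow_l by auto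
  then have "a \<noteq> 0" by (metis dvd_0_right)
  have H_ab: "H a b = (if b = a then - \<beta> / 2 else - trans_p p a b)"
    using a \<open>a \<noteq> 0\<close> smH_diag[of a] by (simp add: smH_def)
  from a(2) show ?thesis
  proof (cases rule: partner_cases)
    case 1
    have "b + 1 \<noteq> a" using 1(1) b by presburger
    with 1 show ?thesis by (auto simp: H_ab trans_p_mod3_eq_1)
  next
    case 2
    have "b \<noteq> a + 1" using 2(1) b by presburger
    with 2 show ?thesis by (auto simp: H_ab trans_p_mod3_eq_2)
  qed
qed

lemma pair_block_X_minus_z:
  "pair_block (S1 l) partner (\<lambda>a b. complex_of_real (H a b) - (if a = b then z else 0)) (dX z) p"
proof
  show "finite (S1 l)" by (rule finite_S1)
next
  fix a assume a: "a \<in> S1 l"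
  then show "partner a \<in> S1 l" by (rule partner_in_S1)
  show "partner (partner a) = a" using a by (simp add: partner_partner mem_S1_iff)
  have "partner a \<noteq> a" using a unfolding mem_S1_iff by (auto elim: partner_cases)
  fix g :: "nat \<Rightarrow> complex"
  have "(\<Sum>b\<in>S1 l. (complex_of_real (H a b) - (if a = b then z else 0)) * g b)
      = (\<Sum>b\<in>S1 l. (if a = b then dX z * g b else 0) + (if partner a = b then - p * g b else 0))"
    by (rule sum.cong) (auto simp: smH_S1_S1 a \<open>partner a \<noteq> a\<close>)
  also have "\<dots> = dX z * g a - p * g (partner a)"
    using a partner_in_S1[OF a] by (simp add: sum.distrib finite_S1)
  finally show "(\<Sum>b\<in>S1 l. (complex_of_real (H a b) - (if a = b then z else 0)) * g b)
      = dX z * g a - p * g (partner a)" .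
qed

lemma resX_eq:
  "block_det z \<noteq> 0 \<Longrightarrow> resX l p \<beta> (real k / 3) 0 z = pair_block_inv (S1 l) partner (dX z) p"
  unfolding resX_def by (rule pair_block.the_inverse_eq[OF pair_block_X_minus_z]) simp

lemma in_spec_X_imp_block_det_0:
  assumes "in_spec_X l p \<beta> (real k / 3) 0 z"
  shows "block_det z = 0"
proof -
  obtain f a where "a \<in> S1 l" "f a \<noteq> 0"
    and eigen: "\<forall>a\<in>S1 l. (\<Sum>b\<in>S1 l. complex_of_real (H a b) * f b) = z * f a"
    using assms unfolding in_spec_X_def by blast
  moreover have "\<forall>a\<in>S1 l. (\<Sum>b\<in>S1 l. (complex_of_real (H a b) - (if a = b then z else 0)) * f b) = 0"
    using eigen by (simp add: left_diff_distrib sum_subtractf finite_S1 mult_delta_left)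
  ultimately have "(dX z)\<^sup>2 = (complex_of_real p)\<^sup>2"
    by (intro pair_block.nontrivial_kernel_imp_singular[OF pair_block_X_minus_z])
  then show ?thesis by simp
qed

lemma smH_S0_S0: "H (3 * i) (3 * j) = \<beta> * of_bool (i = j)"
proof (cases "i = j")
  case False
  then have "3 * j \<noteq> 3 * i" "3 * j \<noteq> 3 * i + 1" "3 * j + 1 \<noteq> 3 * i" by presburger+
  with False show ?thesis by (simp add: smH_eq_0)
qed (simp add: smH_diag)

lemma smH_S1_S0:
  assumes "i < M"
  shows "H (3 * i + 1) (3 * j) = (p - 1) * of_bool (j = i)"
    and "H (3 * i + 2) (3 * j) = (p - 1) * of_bool (j = i + 1)"
proof -
  have "3 * i + 1 < 3 ^ l" "3 * i + 2 < 3 ^ l" using assms by (simp_all add: three_pow_l)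
  moreover have "3 * j \<noteq> 3 * i + 1" "3 * j \<noteq> 3 * i + 2" "3 * j + 1 \<noteq> 3 * i + 2" by presburger+
  ultimately show "H (3 * i + 1) (3 * j) = (p - 1) * of_bool (j = i)"
    and "H (3 * i + 2) (3 * j) = (p - 1) * of_bool (j = i + 1)"
    using trans_p_mod3_eq_1[OF mult_3_plus_mod_3(1)[of i], of p "3 * j"]
      trans_p_mod3_eq_2[OF mult_3_plus_mod_3(2)[of i], of p "3 * j"]
    by (auto simp: smH_def)
qed

lemma smH_mult_3_succ: "H (3 * i) (3 * i + 1) = lap (l - 1) p i (i + 1)"
  using smH_Suc_mult_3_succ[of "l - 1"] one_le_l by simp

lemma smH_mult_3_pred: "0 < i \<Longrightarrow> H (3 * i) (3 * i - 1) = lap (l - 1) p i (i - 1)"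
  using smH_Suc_mult_3_pred[of i "l - 1"] one_le_l by simp

abbreviation resX_J :: "complex \<Rightarrow> nat \<Rightarrow> nat \<Rightarrow> complex" where
  "resX_J z a w \<equiv> \<Sum>b\<in>S1 l. resX l p \<beta> (real k / 3) 0 z a b * H b w"

lemma resX_J_S1:
  assumes "block_det z \<noteq> 0" and "a \<in> S1 l"
  shows "resX_J z a w = (dX z * H a w + complex_of_real p * H (partner a) w) / block_det z"
  unfolding resX_eq[OF assms(1)] by (rule pair_block.sum_pair_block_inv[OF pair_block_X_minus_z assms(2)])

lemma resX_J_succ:
  assumes D: "block_det z \<noteq> 0" and "i < M"
  shows "resX_J z (3 * i + 1) (3 * j) = (p - 1) / block_det z * (dX z * of_bool (j = i) + p * of_bool (j = i + 1))"
proof -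
  have "3 * i + 1 \<in> S1 l" using assms(2) by (rule mult_3_succ_in_S1)
  then show ?thesis
    unfolding resX_J_S1[OF D \<open>3 * i + 1 \<in> S1 l\<close>] partner_3_mult smH_S1_S0[OF assms(2)]
    using D by (simp add: field_simps)
qed

lemma resX_J_pred:
  assumes D: "block_det z \<noteq> 0" and "0 < i" and "i \<le> M"
  shows "resX_J z (3 * i - 1) (3 * j) = (p - 1) / block_det z * (dX z * of_bool (j = i) + p * of_bool (j + 1 = i))"
proof -
  obtain i' where i': "i = i' + 1" using assms(2) gr0_implies_Suc by auto
  then have "i' < M" and pred: "3 * i - 1 = 3 * i' + 2" using assms(3) by simp_all
  then have "3 * i' + 2 \<in> S1 l" using mult_3_plus_mod_3(4)[of i'] by (simp add: mem_S1_iff)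
  then have "resX_J z (3 * i' + 2) (3 * j)
      = (p - 1) / block_det z * (dX z * of_bool (j = i' + 1) + p * of_bool (j = i'))"
    unfolding resX_J_S1[OF D \<open>3 * i' + 2 \<in> S1 l\<close>] partner_3_mult smH_S1_S0[OF \<open>i' < M\<close>]
    using D by (simp add: field_simps)
  then show ?thesis unfolding pred using i' by simp
qed

lemma schur_coupling:
  fixes z :: complex
  assumes D: "block_det z \<noteq> 0" and "i \<le> M"
  shows "(\<Sum>a\<in>S1 l. \<Sum>b\<in>S1 l. complex_of_real (H (3 * i) a) * resX l p \<beta> (real k / 3) 0 z a b
                                * complex_of_real (H b (3 * j)))
       = (p - 1) / block_det z
         * (lap (l - 1) p i (i + 1) * (dX z * of_bool (j = i) + p * of_bool (j = i + 1))
            + (if 0 < i then lap (l - 1) p i (i - 1) else 0) * (dX z * of_bool (j = i) + p * of_bool (j + 1 = i)))"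
proof -
  have "(\<Sum>a\<in>S1 l. \<Sum>b\<in>S1 l. complex_of_real (H (3 * i) a) * resX l p \<beta> (real k / 3) 0 z a b
                                * complex_of_real (H b (3 * j)))
      = (\<Sum>a\<in>S1 l. complex_of_real (H (3 * i) a) * resX_J z a (3 * j))"
    by (simp add: sum_distrib_left mult.assoc)
  also have "\<dots> = (if 3 * i + 1 \<in> S1 l then H (3 * i) (3 * i + 1) * resX_J z (3 * i + 1) (3 * j) else 0)
                  + (if 3 * i - 1 \<in> S1 l then H (3 * i) (3 * i - 1) * resX_J z (3 * i - 1) (3 * j) else 0)"
    by (rule sum_tridiagonal) (simp_all add: finite_S1 mem_S1_iff smH_eq_0)
  also have "(if 3 * i + 1 \<in> S1 l then H (3 * i) (3 * i + 1) * resX_J z (3 * i + 1) (3 * j) else 0)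
      = (p - 1) / block_det z * (lap (l - 1) p i (i + 1) * (dX z * of_bool (j = i) + p * of_bool (j = i + 1)))"
  proof (cases "i < M")
    case True
    then have "3 * i + 1 \<in> S1 l" by (rule mult_3_succ_in_S1)
    then show ?thesis unfolding resX_J_succ[OF D True] smH_mult_3_succ by (simp add: mult_ac)
  next
    case False
    then have "i = M" using assms(2) by simp
    moreover have "lap (l - 1) p M (M + 1) = 0" by (simp add: lap_def M_def)
    ultimately show ?thesis by (simp add: mem_S1_iff)
  qed
  also have "(if 3 * i - 1 \<in> S1 l then H (3 * i) (3 * i - 1) * resX_J z (3 * i - 1) (3 * j) else 0)
      = (p - 1) / block_det z
        * ((if 0 < i then lap (l - 1) p i (i - 1) else 0) * (dX z * of_bool (j = i) + p * of_bool (j + 1 = i)))"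
  proof (cases "0 < i")
    case True
    then have "3 * i - 1 \<in> S1 l" using assms(2) by (rule mult_3_pred_in_S1)
    then show ?thesis
      unfolding resX_J_pred[OF D True assms(2)] smH_mult_3_pred[OF True] using True by (simp add: mult_ac)
  qed (simp add: mem_S1_iff)
  finally show ?thesis by (simp add: distrib_left)
qed

lemma schur_mult_3_eq:
  fixes z :: complex
  assumes D: "block_det z \<noteq> 0" and i: "i \<le> M"
  shows "schur l p \<beta> (real k / 3) 0 z (3 * i) (3 * j)
       = p * (1 - p) / block_det z * lap (l - 1) p i j
         - (if i = j then z - \<beta> + (1 - p) * (dX z + p) / block_det z else 0)"
proof -
  define Lp where "Lp = complex_of_real (lap (l - 1) p i (i + 1))"
  define Lm where "Lm = complex_of_real (if 0 < i then lap (l - 1) p i (i - 1) else 0)"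
  have "Lp + Lm = - 1"
    unfolding Lp_def Lm_def of_real_add[symmetric] lap_row_sum by simp
  then have row_sum: "Lm = - 1 - Lp" by (simp add: eq_diff_eq add.commute)
  have lap_ij: "lap (l - 1) p i j = of_bool (j = i) + of_bool (j = i + 1) * Lp + of_bool (j + 1 = i) * Lm"
    unfolding Lp_def Lm_def by (subst lap_tridiagonal) auto
  have "schur l p \<beta> (real k / 3) 0 z (3 * i) (3 * j)
      = \<beta> * of_bool (i = j) - (if i = j then z else 0)
        - (p - 1) / block_det z * (Lp * (dX z * of_bool (j = i) + p * of_bool (j = i + 1))
                                  + Lm * (dX z * of_bool (j = i) + p * of_bool (j + 1 = i)))"
    unfolding schur_def schur_coupling[OF D i] smH_S0_S0 Lp_def Lm_def by simp
  also have "\<dots> = p * (1 - p) / block_det z * lap (l - 1) p i j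
                  - (if i = j then z - \<beta> + (1 - p) * (dX z + p) / block_det z else 0)"
  proof -
    define d where "d = dX z"
    define Dz where "Dz = d\<^sup>2 - (complex_of_real p)\<^sup>2"
    have "Dz \<noteq> 0" using D unfolding Dz_def d_def .
    then show ?thesis
      unfolding lap_ij row_sum d_def[symmetric] unfolding Dz_def[symmetric]
      by (cases "i = j") (simp_all add: field_simps)
  qed
  finally show ?thesis .
qed

lemma block_det_factor: "block_det z = (dX z - p) * (dX z + p)"
  by (metis power2_eq_square square_diff_square_factored mult.commute)

lemma block_det_eq_0_iff:
  "block_det z = 0 \<longleftrightarrow> z \<in> {complex_of_real (- \<beta> / 2 - p), complex_of_real (- \<beta> / 2 + p)}"
proof -
  have "block_det z = 0 \<longleftrightarrow> dX z = p \<or> dX z = - p"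
    unfolding block_det_factor by (simp add: eq_neg_iff_add_eq_0)
  also have "\<dots> \<longleftrightarrow> z \<in> {complex_of_real (- \<beta> / 2 - p), complex_of_real (- \<beta> / 2 + p)}"
    by (auto simp: algebra_simps)
  finally show ?thesis .
qed

lemma phi_eq:
  fixes z :: complex
  shows "4 * p * (p - 1) / (4 * p\<^sup>2 - (\<beta> + 2 * z)\<^sup>2) = p * (1 - p) / block_det z"
proof -
  have den: "4 * p\<^sup>2 - (\<beta> + 2 * z)\<^sup>2 = - 4 * block_det z"
    by (simp add: power2_eq_square algebra_simps)
  have num: "complex_of_real (4 * p * (p - 1)) = - 4 * complex_of_real (p * (1 - p))"
    by (simp add: algebra_simps)
  show ?thesis
    unfolding den num by (rule mult_divide_mult_cancel_left) simp
qed

lemma psi_eq: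
  fixes z :: complex
  assumes "block_det z \<noteq> 0"
  shows "- (\<beta>\<^sup>2 + 2 * \<beta> * p + \<beta> * z - 2 * p * z - 2 * p - 2 * z\<^sup>2 + 2) / (\<beta> + 2 * p + 2 * z)
       = z - \<beta> + (1 - p) * (dX z + p) / block_det z"
proof -
  note det = block_det_factor[of z]
  have den: "\<beta> + 2 * p + 2 * z = - 2 * (dX z - p)"
    by (simp add: algebra_simps)
  have num: "\<beta>\<^sup>2 + 2 * \<beta> * p + \<beta> * z - 2 * p * z - 2 * p - 2 * z\<^sup>2 + 2
           = (\<beta> + 2 * p + 2 * z) * (\<beta> - z) + 2 * (1 - p)"
    by (simp add: power2_eq_square algebra_simps)
  define x where "x = dX z"
  have "x - p \<noteq> 0" "x + p \<noteq> 0" using assms det unfolding x_def by auto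
  have "- ((- 2 * (x - p)) * (\<beta> - z) + 2 * (1 - p)) / (- 2 * (x - p)) = z - \<beta> + (1 - p) / (x - p)"
    using \<open>x - p \<noteq> 0\<close> by (simp add: field_simps)
  also have "\<dots> = z - \<beta> + (1 - p) * (x + p) / ((x - p) * (x + p))"
    using \<open>x + p \<noteq> 0\<close> by simp
  finally show ?thesis
    unfolding num unfolding den det unfolding x_def[symmetric] .
qed

lemma decimation_function_eq:
  fixes z :: complex
  assumes "0 < p" and "p < 1" and "block_det z \<noteq> 0"
  shows "(- (\<beta>\<^sup>2 + 2 * \<beta> * p + \<beta> * z - 2 * p * z - 2 * p - 2 * z\<^sup>2 + 2) / (\<beta> + 2 * p + 2 * z))
           / (4 * p * (p - 1) / (4 * p\<^sup>2 - (\<beta> + 2 * z)\<^sup>2))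
       = (- \<beta> + 2 * p - 2 * z) * (\<beta>\<^sup>2 + 2 * \<beta> * p + \<beta> * z - 2 * p * z - 2 * p - 2 * z\<^sup>2 + 2)
           / (4 * p * (1 - p))"
proof -
  define N where "N = \<beta>\<^sup>2 + 2 * \<beta> * p + \<beta> * z - 2 * p * z - 2 * p - 2 * z\<^sup>2 + 2"
  define A where "A = \<beta> + 2 * p + 2 * z"
  define B where "B = - \<beta> + 2 * p - 2 * z"
  have det: "block_det z = - (A * B) / 4"
    unfolding A_def B_def by (simp add: power2_eq_square field_simps)
  have "4 * p\<^sup>2 - (\<beta> + 2 * z)\<^sup>2 = B * A"
    unfolding A_def B_def by (simp add: power2_eq_square algebra_simps)
  moreover have "A \<noteq> 0" "B \<noteq> 0" using assms(3) unfolding det by auto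
  moreover have "complex_of_real (4 * p * (p - 1)) \<noteq> 0" using assms(1,2) by simp
  ultimately show ?thesis
    unfolding N_def[symmetric] A_def[symmetric] B_def[symmetric] by (simp add: field_simps)
qed

text \<open>Because x / 0 = 0, phi vanishes exactly at the zeros of its denominator; for 0 < p < 1
  its numerator never does.\<close>
lemma exceptional_set_eq:
  assumes "0 < p" and "p < 1"
  shows "exceptional_set l p \<beta> (real k / 3) 0 (\<lambda>z. 4 * p * (p - 1) / (4 * p\<^sup>2 - (\<beta> + 2 * z)\<^sup>2))
       = {z. block_det z = 0}"
proof -
  have "p * (1 - p) / block_det z = 0 \<longleftrightarrow> block_det z = 0" for z
    using assms by simp
  then show ?thesis
    unfolding exceptional_set_def phi_eq using in_spec_X_imp_block_det_0 by auto
qed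

lemma spectrally_similar_phi_psi:
  assumes "0 < p" and "p < 1"
  shows "spectrally_similar l p \<beta> (real k / 3) 0
           (\<lambda>z. 4 * p * (p - 1) / (4 * p\<^sup>2 - (\<beta> + 2 * z)\<^sup>2))
           (\<lambda>z. - (\<beta>\<^sup>2 + 2 * \<beta> * p + \<beta> * z - 2 * p * z - 2 * p - 2 * z\<^sup>2 + 2) / (\<beta> + 2 * p + 2 * z))"
  unfolding spectrally_similar_def exceptional_set_eq[OF assms]
proof (intro allI impI ballI)
  fix z u w
  assume "z \<notin> {z. block_det z = 0}" and "u \<in> V (l - 1)"
  then have D: "block_det z \<noteq> 0" and "u \<le> M" by (simp_all add: V_def M_def)
  show "schur l p \<beta> (real k / 3) 0 z (3 * u) (3 * w)
      = 4 * p * (p - 1) / (4 * p\<^sup>2 - (\<beta> + 2 * z)\<^sup>2) * lap (l - 1) p u w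
        - (if u = w then - (\<beta>\<^sup>2 + 2 * \<beta> * p + \<beta> * z - 2 * p * z - 2 * p - 2 * z\<^sup>2 + 2)
                          / (\<beta> + 2 * p + 2 * z) else 0)"
    unfolding phi_eq psi_eq[OF D] using D \<open>u \<le> M\<close> by (rule schur_mult_3_eq)
qed

end

theorem lemma3p7:
  fixes p \<beta> :: real and l k :: nat
  assumes "0 < p" and "p < 1" and "1 \<le> l" and "k \<in> {1, 2}"
  shows "spectrally_similar l p \<beta> (real k / 3) 0
           (\<lambda>z. 4 * p * (p - 1) / (4 * p\<^sup>2 - (\<beta> + 2 * z)\<^sup>2))
           (\<lambda>z. - (\<beta>\<^sup>2 + 2 * \<beta> * p + \<beta> * z - 2 * p * z - 2 * p - 2 * z\<^sup>2 + 2) / (\<beta> + 2 * p + 2 * z))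
       \<and> (\<forall>z::complex. z \<notin> exceptional_set l p \<beta> (real k / 3) 0
                    (\<lambda>z. 4 * p * (p - 1) / (4 * p\<^sup>2 - (\<beta> + 2 * z)\<^sup>2)) \<longrightarrow>
            (- (\<beta>\<^sup>2 + 2 * \<beta> * p + \<beta> * z - 2 * p * z - 2 * p - 2 * z\<^sup>2 + 2) / (\<beta> + 2 * p + 2 * z))
              / (4 * p * (p - 1) / (4 * p\<^sup>2 - (\<beta> + 2 * z)\<^sup>2))
            = (- \<beta> + 2 * p - 2 * z) * (\<beta>\<^sup>2 + 2 * \<beta> * p + \<beta> * z - 2 * p * z - 2 * p - 2 * z\<^sup>2 + 2)
                / (4 * p * (1 - p)))
       \<and> exceptional_set l p \<beta> (real k / 3) 0
           (\<lambda>z. 4 * p * (p - 1) / (4 * p\<^sup>2 - (\<beta> + 2 * z)\<^sup>2))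
         = {complex_of_real (- \<beta> / 2 - p), complex_of_real (- \<beta> / 2 + p)}"
proof -
  interpret amo_thirds l k p \<beta> using assms(3,4) by unfold_locales
  show ?thesis
    using spectrally_similar_phi_psi[OF assms(1,2)] decimation_function_eq[OF assms(1,2)]
      block_det_eq_0_iff
    unfolding exceptional_set_eq[OF assms(1,2)] by auto
qed

end
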